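(* Let $\delta,D\ge0$ and $(X,x,\Gamma)\in\mathcal{M}(\delta,D)$. Then the finite set $\Sigma_{2D+72\delta}(\Gamma,x)=\{g\in\Gamma:d(x,gx)\le 2D+72\delta\}$ generates $\Gamma$.
   Context: Gromov product $(y,z)_x=\frac12(d(x,y)+d(x,z)-d(y,z))$; $X$ is $\delta$-hyperbolic if $(x,z)_w\geq\min\{(x,y)_w,(y,z)_w\}-\delta$ for all points. $\Lambda(\Gamma)$: accumulation points in the Gromov boundary $\partial X$ of an orbit $\Gamma x$; elementary means $\#\Lambda(\Gamma)\le2$. $\mathrm{QC\text{-}Hull}(C)$: union of all geodesic lines with both endpoints in $C\subseteq\partial X$. Quasiconvex-cocompact with codiameter $\le D$: for all $y,y'\in\mathrm{QC\text{-}Hull}(\Lambda(\Gamma))$ there is $g\in\Gamma$ with $d(gy,y')\le D$. $\mathcal{M}(\delta,D)$: triples $(X,x,\Gamma)$, $X$ proper geodesic $\delta$-hyperbolic, $\Gamma\le\mathrm{Isom}(X)$ discrete, torsion-free, non-elementary, quasiconvex-cocompact with codiameter $\le D$, $x\in\mathrm{QC\text{-}Hull}(\Lambda(\Gamma))$. *)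

theory Defs
  imports "HOL-Analysis.Analysis"
begin

text \<open>The space X is the whole of a type 'a of class metric_space.\<close>

definition gprod :: "'a::metric_space \<Rightarrow> 'a \<Rightarrow> 'a \<Rightarrow> real" where
  "gprod w y z = (dist w y + dist w z - dist y z) / 2"

definition proper_space :: "'a::metric_space itself \<Rightarrow> bool" where
  "proper_space TYPE('a) \<longleftrightarrow> (\<forall>(x::'a) r. compact (cball x r))"

definition geodesic_space :: "'a::metric_space itself \<Rightarrow> bool" where
  "geodesic_space TYPE('a) \<longleftrightarrow> (\<forall>x y::'a. \<exists>\<gamma>::real \<Rightarrow> 'a.
      \<gamma> 0 = x \<and> \<gamma> (dist x y) = y \<and>
      (\<forall>s\<in>{0..dist x y}. \<forall>t\<in>{0..dist x y}. dist (\<gamma> s) (\<gamma> t) = \<bar>s - t\<bar>))"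

definition gromov_hyperbolic :: "real \<Rightarrow> 'a::metric_space itself \<Rightarrow> bool" where
  "gromov_hyperbolic \<delta> TYPE('a) \<longleftrightarrow>
     (\<forall>x y z w::'a. gprod w x z \<ge> min (gprod w x y) (gprod w y z) - \<delta>)"

text \<open>Both notions are basepoint-independent,
  so we quantify over all basepoints.\<close>

definition gromov_seq :: "(nat \<Rightarrow> 'a::metric_space) \<Rightarrow> bool" where
  "gromov_seq u \<longleftrightarrow> (\<forall>w M. \<exists>N. \<forall>n\<ge>N. \<forall>m\<ge>N. gprod w (u n) (u m) \<ge> M)"

definition gromov_equiv :: "(nat \<Rightarrow> 'a::metric_space) \<Rightarrow> (nat \<Rightarrow> 'a) \<Rightarrow> bool" where
  "gromov_equiv u v \<longleftrightarrow> (\<forall>w M. \<exists>N. \<forall>n\<ge>N. \<forall>m\<ge>N. gprod w (u n) (v m) \<ge> M)"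

definition gromov_class :: "(nat \<Rightarrow> 'a::metric_space) \<Rightarrow> (nat \<Rightarrow> 'a) set" where
  "gromov_class u = {v. gromov_seq v \<and> gromov_equiv u v}"

definition gromov_boundary :: "(nat \<Rightarrow> 'a::metric_space) set set" where
  "gromov_boundary = {gromov_class u | u. gromov_seq u}"

definition limit_set :: "('a::metric_space \<Rightarrow> 'a) set \<Rightarrow> 'a \<Rightarrow> (nat \<Rightarrow> 'a) set set" where
  "limit_set \<Gamma> x = {\<xi> \<in> gromov_boundary. \<exists>u. (\<forall>n. u n \<in> (\<lambda>g. g x) ` \<Gamma>) \<and> u \<in> \<xi>}"

definition geodesic_line :: "(real \<Rightarrow> 'a::metric_space) \<Rightarrow> bool" where
  "geodesic_line \<gamma> \<longleftrightarrow> (\<forall>s t. dist (\<gamma> s) (\<gamma> t) = \<bar>s - t\<bar>)"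

definition QC_Hull :: "(nat \<Rightarrow> 'a::metric_space) set set \<Rightarrow> 'a set" where
  "QC_Hull C = \<Union>{range \<gamma> | \<gamma>. geodesic_line \<gamma> \<and>
      gromov_class (\<lambda>n. \<gamma> (real n)) \<in> C \<and> gromov_class (\<lambda>n. \<gamma> (- real n)) \<in> C}"

definition isometry :: "('a::metric_space \<Rightarrow> 'a) \<Rightarrow> bool" where
  "isometry g \<longleftrightarrow> bij g \<and> (\<forall>a b. dist (g a) (g b) = dist a b)"

definition isom_subgroup :: "('a::metric_space \<Rightarrow> 'a) set \<Rightarrow> bool" where
  "isom_subgroup \<Gamma> \<longleftrightarrow> (\<forall>g\<in>\<Gamma>. isometry g) \<and> id \<in> \<Gamma> \<and>
     (\<forall>g\<in>\<Gamma>. \<forall>h\<in>\<Gamma>. g \<circ> h \<in> \<Gamma>) \<and> (\<forall>g\<in>\<Gamma>. inv g \<in> \<Gamma>)"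

text \<open>Discreteness (for isometry groups of proper spaces): orbits meet bounded sets in
  finitely many group elements.\<close>
definition discrete_action :: "('a::metric_space \<Rightarrow> 'a) set \<Rightarrow> bool" where
  "discrete_action \<Gamma> \<longleftrightarrow> (\<forall>x R. finite {g\<in>\<Gamma>. dist x (g x) \<le> R})"

definition torsion_free :: "('a \<Rightarrow> 'a) set \<Rightarrow> bool" where
  "torsion_free \<Gamma> \<longleftrightarrow> (\<forall>g\<in>\<Gamma>. \<forall>n::nat. n \<ge> 1 \<longrightarrow> g ^^ n = id \<longrightarrow> g = id)"

definition non_elementary :: "('a::metric_space \<Rightarrow> 'a) set \<Rightarrow> 'a \<Rightarrow> bool" where
  "non_elementary \<Gamma> x \<longleftrightarrow> \<not> (finite (limit_set \<Gamma> x) \<and> card (limit_set \<Gamma> x) \<le> 2)"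

definition qc_cocompact :: "real \<Rightarrow> ('a::metric_space \<Rightarrow> 'a) set \<Rightarrow> 'a \<Rightarrow> bool" where
  "qc_cocompact D \<Gamma> x \<longleftrightarrow> (\<forall>y\<in>QC_Hull (limit_set \<Gamma> x). \<forall>y'\<in>QC_Hull (limit_set \<Gamma> x).
       \<exists>g\<in>\<Gamma>. dist (g y) y' \<le> D)"

definition class_M :: "real \<Rightarrow> real \<Rightarrow> 'a::metric_space \<Rightarrow> ('a \<Rightarrow> 'a) set \<Rightarrow> bool" where
  "class_M \<delta> D x \<Gamma> \<longleftrightarrow> proper_space TYPE('a) \<and> geodesic_space TYPE('a) \<and>
     gromov_hyperbolic \<delta> TYPE('a) \<and> isom_subgroup \<Gamma> \<and> discrete_action \<Gamma> \<and>
     torsion_free \<Gamma> \<and> non_elementary \<Gamma> x \<and> qc_cocompact D \<Gamma> x \<and>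
     x \<in> QC_Hull (limit_set \<Gamma> x)"

inductive_set generated_by :: "('a \<Rightarrow> 'a) set \<Rightarrow> ('a \<Rightarrow> 'a) set" for S where
  gen_id: "id \<in> generated_by S"
| gen_left: "s \<in> S \<Longrightarrow> g \<in> generated_by S \<Longrightarrow> s \<circ> g \<in> generated_by S"
| gen_inv: "s \<in> S \<Longrightarrow> g \<in> generated_by S \<Longrightarrow> inv s \<circ> g \<in> generated_by S"

end

theory Submission
  imports Defs "HOL-Library.Diagonal_Subsequence" "HOL-Library.Nat_Bijection"
begin

(* Let H be generated by the elements of \<Gamma> moving x by at most R = 2D + 72\<delta>. By discreteness
   there is \<epsilon> > 0 such that no element moves x by a distance in (R, R + \<epsilon>]. Call a point of the
   hull good if it lies within D of the orbit Hx. Cocompactness puts every hull point within D of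
   \<Gamma>x, so if y is good and y' is a hull point with d(y, y') \<le> 4\<delta> + \<epsilon>, there are h in H and g in \<Gamma>
   with d(hx, gx) \<le> 2D + 4\<delta> + \<epsilon>; then h^-1 g lies in H, and y' is good. Goodness therefore
   spreads along each geodesic line of the hull, between asymptotic hull lines (which come within
   4\<delta> + \<epsilon> of each other), and hence between any two hull lines, since two non-asymptotic lines
   are joined end to end by a third hull line, a limit of geodesic segments. A hull line through x
   is mapped by any g in \<Gamma> to a hull line through gx, so every gx is good and g lies in H. *)

section \<open>Gromov products and asymptotic sequences\<close>

lemma gprod_commute: "gprod w y z = gprod w z y"
  unfolding gprod_def by (simp add: dist_commute)

lemma gprod_nonneg: "gprod w y z \<ge> 0"
  unfolding gprod_def using dist_triangle[of y z w] by (simp add: dist_commute)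

lemma gprod_le_dist: "gprod w y z \<le> dist w y"
  unfolding gprod_def using dist_triangle[of w z y] by (simp add: dist_commute)

lemma gprod_change_base: "gprod w y z \<le> gprod w' y z + dist w w'"
  using dist_triangle[of w y w'] dist_triangle[of w z w'] unfolding gprod_def
  by (simp add: field_simps)

lemma gprod_lipschitz: "gprod w y z \<le> gprod w y' z + dist y y'"
  using dist_triangle[of w y y'] dist_triangle[of y' z y] unfolding gprod_def
  by (simp add: field_simps dist_commute)

lemma gromov_hyperbolicD:
  "gromov_hyperbolic \<delta> TYPE('a::metric_space) \<Longrightarrow> min (gprod w x y) (gprod w y z) - \<delta> \<le> gprod w x (z::'a)"
  unfolding gromov_hyperbolic_def by blast

definition gromov_equiv_at :: "'a::metric_space \<Rightarrow> (nat \<Rightarrow> 'a) \<Rightarrow> (nat \<Rightarrow> 'a) \<Rightarrow> bool" where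
  "gromov_equiv_at w u v \<longleftrightarrow> (\<forall>M. \<exists>N. \<forall>n\<ge>N. \<forall>m\<ge>N. gprod w (u n) (v m) \<ge> M)"

lemma gromov_equiv_if_equiv_at:
  assumes "gromov_equiv_at w u v"
  shows "gromov_equiv u v"
  unfolding gromov_equiv_def
proof (intro allI)
  fix w' M
  obtain N where N: "\<forall>n\<ge>N. \<forall>m\<ge>N. gprod w (u n) (v m) \<ge> M + dist w w'"
    using assms unfolding gromov_equiv_at_def by blast
  have "M \<le> gprod w' (u n) (v m)" if "n \<ge> N" "m \<ge> N" for n m
  proof -
    have "gprod w (u n) (v m) \<ge> M + dist w w'" using N that by blast
    then show ?thesis using gprod_change_base[of w "u n" "v m" w'] by linarith
  qed
  then show "\<exists>N. \<forall>n\<ge>N. \<forall>m\<ge>N. M \<le> gprod w' (u n) (v m)" by blast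
qed

lemma gromov_equiv_sym: "gromov_equiv u v \<Longrightarrow> gromov_equiv v u"
  unfolding gromov_equiv_def by (metis gprod_commute)

lemma gromov_equiv_trans:
  assumes hyp: "gromov_hyperbolic \<delta> TYPE('a::metric_space)"
    and uv: "gromov_equiv u v" and vz: "gromov_equiv v (z::nat \<Rightarrow> 'a)"
  shows "gromov_equiv u z"
  unfolding gromov_equiv_def
proof (intro allI)
  fix w M
  obtain N1 where N1: "\<forall>n\<ge>N1. \<forall>m\<ge>N1. gprod w (u n) (v m) \<ge> M + \<delta>"
    using uv unfolding gromov_equiv_def by blast
  obtain N2 where N2: "\<forall>n\<ge>N2. \<forall>m\<ge>N2. gprod w (v n) (z m) \<ge> M + \<delta>"
    using vz unfolding gromov_equiv_def by blast
  have "M \<le> gprod w (u n) (z m)" if "n \<ge> max N1 N2" "m \<ge> max N1 N2" for n m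
  proof -
    have "gprod w (u n) (v (max N1 N2)) \<ge> M + \<delta>" "gprod w (v (max N1 N2)) (z m) \<ge> M + \<delta>"
      using N1 N2 that by auto
    then show ?thesis using gromov_hyperbolicD[OF hyp, of w "u n" "v (max N1 N2)" "z m"] by linarith
  qed
  then show "\<exists>N. \<forall>n\<ge>N. \<forall>m\<ge>N. M \<le> gprod w (u n) (z m)" by blast
qed

lemma gromov_class_eq_if_equiv:
  assumes "gromov_hyperbolic \<delta> TYPE('a::metric_space)" and "gromov_equiv u (v::nat \<Rightarrow> 'a)"
  shows "gromov_class u = gromov_class v"
  unfolding gromov_class_def
  using gromov_equiv_trans[OF assms(1)] gromov_equiv_sym[OF assms(2)] assms(2) by blast

section \<open>Geodesic lines\<close>

lemma geodesic_line_gprod: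
  "geodesic_line \<gamma> \<Longrightarrow> 0 \<le> s \<Longrightarrow> 0 \<le> t \<Longrightarrow> gprod (\<gamma> 0) (\<gamma> s) (\<gamma> t) = min s t"
  unfolding gprod_def geodesic_line_def by (simp add: abs_if min_def)

lemma geodesic_line_reflect: "geodesic_line \<gamma> \<Longrightarrow> geodesic_line (\<lambda>t. \<gamma> (- t))"
  unfolding geodesic_line_def by (simp add: abs_minus_commute)

lemma gromov_seq_geodesic_line:
  assumes "geodesic_line \<gamma>"
  shows "gromov_seq (\<lambda>n. \<gamma> (real n))"
proof -
  have "M \<le> gprod (\<gamma> 0) (\<gamma> (real n)) (\<gamma> (real m))" if "nat \<lceil>M\<rceil> \<le> n" "nat \<lceil>M\<rceil> \<le> m" for M n m
    using geodesic_line_gprod[OF assms, of "real n" "real m"] that by linarith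
  then have "gromov_equiv_at (\<gamma> 0) (\<lambda>n. \<gamma> (real n)) (\<lambda>n. \<gamma> (real n))"
    unfolding gromov_equiv_at_def by blast
  then show ?thesis
    using gromov_equiv_if_equiv_at unfolding gromov_seq_def gromov_equiv_def by blast
qed

lemma geodesic_line_gprod_mono:
  assumes hyp: "gromov_hyperbolic \<delta> TYPE('a::metric_space)"
    and l: "geodesic_line (\<gamma>::real \<Rightarrow> 'a)" and "0 \<le> t" "t \<le> t'"
  shows "gprod (\<gamma> 0) (\<gamma> t) y \<le> gprod (\<gamma> 0) (\<gamma> t') y + \<delta>"
proof -
  have "gprod (\<gamma> 0) (\<gamma> t') (\<gamma> t) = t" using geodesic_line_gprod[OF l, of t' t] assms by simp
  moreover have "gprod (\<gamma> 0) (\<gamma> t) y \<le> t"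
    using gprod_le_dist[of "\<gamma> 0" "\<gamma> t" y] l \<open>0 \<le> t\<close> unfolding geodesic_line_def by simp
  ultimately show ?thesis using gromov_hyperbolicD[OF hyp, of "\<gamma> 0" "\<gamma> t'" "\<gamma> t" y] by linarith
qed

lemma geodesic_line_busemann_almost_min:
  assumes "geodesic_line \<gamma>" and "\<eta> > 0"
  obtains T :: nat where "\<And>m. dist w (\<gamma> (real T)) - real T - \<eta> < dist w (\<gamma> (real m)) - real m"
proof -
  define \<phi> where "\<phi> n = dist w (\<gamma> (real n)) - real n" for n :: nat
  have "\<phi> n \<ge> - dist w (\<gamma> 0)" for n
    using dist_triangle[of "\<gamma> 0" "\<gamma> (real n)" w] assms(1)
    unfolding \<phi>_def geodesic_line_def by (simp add: dist_commute)
  then have bdd: "bdd_below (range \<phi>)" by (intro bdd_belowI2)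
  obtain T where T: "\<phi> T < Inf (range \<phi>) + \<eta>"
    using cInf_lessD[of "range \<phi>" "Inf (range \<phi>) + \<eta>"] assms(2) by auto
  have lower: "Inf (range \<phi>) \<le> \<phi> m" for m using bdd by (simp add: cInf_lower)
  have "\<phi> T - \<eta> < \<phi> m" for m using T lower[of m] by linarith
  then show ?thesis using that unfolding \<phi>_def by blast
qed

text \<open>The point of the second line almost minimising its Busemann function, seen from the
  basepoint of the first line, has large Gromov product with points far out on the first line.\<close>
lemma asymptotic_geodesic_lines_close:
  assumes hyp: "gromov_hyperbolic \<delta> TYPE('a::metric_space)" and "\<delta> \<ge> 0"
    and l1: "geodesic_line (\<gamma>1::real \<Rightarrow> 'a)" and l2: "geodesic_line \<gamma>2"
    and eq: "gromov_equiv (\<lambda>n. \<gamma>1 (real n)) (\<lambda>n. \<gamma>2 (real n))"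
    and "\<eta> > 0"
  obtains s t where "dist (\<gamma>1 s) (\<gamma>2 t) \<le> 4 * \<delta> + \<eta>"
proof -
  define w where "w = \<gamma>1 0"
  obtain T where T: "\<And>m. dist w (\<gamma>2 (real T)) - real T - \<eta> < dist w (\<gamma>2 (real m)) - real m"
    using geodesic_line_busemann_almost_min[OF l2 \<open>\<eta> > 0\<close>] by blast
  define z where "z = \<gamma>2 (real T)"
  define r where "r = dist w z - \<eta> / 2"
  show ?thesis
  proof (cases "r < 0")
    case True
    then show ?thesis using that[of 0 "real T"] \<open>\<delta> \<ge> 0\<close> \<open>\<eta> > 0\<close> unfolding r_def z_def w_def by simp
  next
    case False
    obtain N where N: "\<forall>n\<ge>N. \<forall>m\<ge>N. gprod w (\<gamma>1 (real n)) (\<gamma>2 (real m)) \<ge> dist w z"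
      using eq unfolding gromov_equiv_def by blast
    define n where "n = max N (nat \<lceil>r\<rceil>)"
    define m where "m = max N T"
    define y where "y = \<gamma>1 r"
    define q where "q = \<gamma>2 (real m)"
    have "gprod w y (\<gamma>1 (real n)) = r"
      unfolding w_def y_def using geodesic_line_gprod[OF l1, of r "real n"] False
      unfolding n_def by linarith
    moreover have "gprod w (\<gamma>1 (real n)) q \<ge> dist w z"
      using N unfolding q_def n_def m_def by simp
    moreover have "r \<le> dist w z" using \<open>\<eta> > 0\<close> unfolding r_def by simp
    ultimately have yq: "gprod w y q \<ge> r - \<delta>"
      using gromov_hyperbolicD[OF hyp, of w y "\<gamma>1 (real n)" q] by linarith
    have "dist z q = real m - real T"
      using l2 unfolding z_def q_def geodesic_line_def m_def by simp
    then have "gprod w z q \<ge> r"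
      using T[of m] unfolding gprod_def r_def z_def q_def by simp
    then have "gprod w y z \<ge> r - 2 * \<delta>"
      using gromov_hyperbolicD[OF hyp, of w y q z] yq \<open>\<delta> \<ge> 0\<close> by (simp add: gprod_commute)
    moreover have "dist w y = r" using l1 False unfolding w_def y_def geodesic_line_def by simp
    ultimately have "dist y z \<le> 4 * \<delta> + \<eta>" using \<open>\<eta> > 0\<close> unfolding gprod_def r_def by simp
    then show ?thesis using that unfolding y_def z_def by blast
  qed
qed

section \<open>Centred geodesic segments\<close>

lemma gprod_add_eq_dist:
  shows "gprod p w q + gprod q w p = dist p q" and "gprod w p q + gprod p w q = dist w p"
  unfolding gprod_def by (simp_all add: dist_commute field_simps)

definition geodesic_segment :: "'a::metric_space \<Rightarrow> 'a \<Rightarrow> real \<Rightarrow> 'a" where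
  "geodesic_segment p q = (SOME \<gamma>. \<gamma> 0 = p \<and> \<gamma> (dist p q) = q \<and>
     (\<forall>s\<in>{0..dist p q}. \<forall>t\<in>{0..dist p q}. dist (\<gamma> s) (\<gamma> t) = \<bar>s - t\<bar>))"

lemma geodesic_segment:
  fixes p q :: "'a::metric_space"
  assumes "geodesic_space TYPE('a)"
  shows "geodesic_segment p q 0 = p" and "geodesic_segment p q (dist p q) = q"
    and "\<And>s t. s \<in> {0..dist p q} \<Longrightarrow> t \<in> {0..dist p q} \<Longrightarrow>
           dist (geodesic_segment p q s) (geodesic_segment p q t) = \<bar>s - t\<bar>"
proof -
  have "\<exists>\<gamma>::real \<Rightarrow> 'a. \<gamma> 0 = p \<and> \<gamma> (dist p q) = q \<and>
      (\<forall>s\<in>{0..dist p q}. \<forall>t\<in>{0..dist p q}. dist (\<gamma> s) (\<gamma> t) = \<bar>s - t\<bar>)"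
    using assms unfolding geodesic_space_def by blast
  from someI_ex[OF this] show "geodesic_segment p q 0 = p" "geodesic_segment p q (dist p q) = q"
    "\<And>s t. s \<in> {0..dist p q} \<Longrightarrow> t \<in> {0..dist p q} \<Longrightarrow>
       dist (geodesic_segment p q s) (geodesic_segment p q t) = \<bar>s - t\<bar>"
    unfolding geodesic_segment_def by blast+
qed

text \<open>Time \<open>0\<close> is the point at distance \<open>(w\<cdot>q)\<^sub>p\<close> from \<open>p\<close>, the point of the segment
  closest (up to \<open>2\<delta>\<close>) to \<open>w\<close>; beyond its ends the segment is extended constantly.\<close>
definition centered_segment :: "'a::metric_space \<Rightarrow> 'a \<Rightarrow> 'a \<Rightarrow> real \<Rightarrow> 'a" where
  "centered_segment w p q t = geodesic_segment p q (max 0 (min (dist p q) (gprod p w q + t)))"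

lemma centered_segment_lipschitz:
  fixes w p q :: "'a::metric_space"
  assumes "geodesic_space TYPE('a)"
  shows "dist (centered_segment w p q t) (centered_segment w p q t') \<le> \<bar>t - t'\<bar>"
proof -
  let ?L = "dist p q" and ?s = "gprod p w q"
  have clamp_lip: "\<bar>max 0 (min L a) - max 0 (min L b)\<bar> \<le> \<bar>a - b\<bar>" for L a b :: real
    by (simp add: abs_if min_def max_def)
  have "dist (centered_segment w p q t) (centered_segment w p q t')
      = \<bar>max 0 (min ?L (?s + t)) - max 0 (min ?L (?s + t'))\<bar>"
    unfolding centered_segment_def by (rule geodesic_segment(3)[OF assms]) auto
  also have "\<dots> \<le> \<bar>t - t'\<bar>"
    using clamp_lip[of ?L "?s + t" "?s + t'"] by simp
  finally show ?thesis .
qed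

lemma centered_segment_isometric:
  fixes w p q :: "'a::metric_space"
  assumes "geodesic_space TYPE('a)"
    and "t \<in> {- gprod p w q..gprod q w p}" and "t' \<in> {- gprod p w q..gprod q w p}"
  shows "dist (centered_segment w p q t) (centered_segment w p q t') = \<bar>t - t'\<bar>"
proof -
  have "max 0 (min (dist p q) (gprod p w q + u)) = gprod p w q + u"
    if "u \<in> {- gprod p w q..gprod q w p}" for u
    using that gprod_add_eq_dist(1)[of p w q] by auto
  then show ?thesis
    using assms gprod_add_eq_dist(1)[of p w q] geodesic_segment(3)[OF assms(1)]
    unfolding centered_segment_def by simp
qed

lemma centered_segment_ends:
  fixes w p q :: "'a::metric_space"
  assumes "geodesic_space TYPE('a)"
  shows "centered_segment w p q (- gprod p w q) = p"
    and "centered_segment w p q (gprod q w p) = q"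
  using geodesic_segment(1,2)[OF assms, of p q] gprod_add_eq_dist(1)[of p w q]
    gprod_nonneg[of p w q] gprod_nonneg[of q w p]
  unfolding centered_segment_def by auto

lemma dist_centered_segment_0:
  fixes w p q :: "'a::metric_space"
  assumes hyp: "gromov_hyperbolic \<delta> TYPE('a)" and geod: "geodesic_space TYPE('a)"
  shows "dist w (centered_segment w p q 0) \<le> gprod w p q + 2 * \<delta>"
proof -
  let ?\<sigma> = "centered_segment w p q"
  define z where "z = ?\<sigma> 0"
  have range: "- gprod p w q \<in> {- gprod p w q..gprod q w p}" "0 \<in> {- gprod p w q..gprod q w p}"
    "gprod q w p \<in> {- gprod p w q..gprod q w p}"
    using gprod_nonneg[of p w q] gprod_nonneg[of q w p] by simp_all
  have dpz: "dist p z = gprod p w q"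
    using centered_segment_isometric[OF geod range(1,2)] gprod_nonneg[of p w q]
    unfolding z_def centered_segment_ends(1)[OF geod] by simp
  have dzq: "dist z q = gprod q w p"
    using centered_segment_isometric[OF geod range(2,3)] gprod_nonneg[of q w p]
    unfolding z_def centered_segment_ends(2)[OF geod] by simp
  have "gprod p z q = gprod p w q"
    using dpz dzq gprod_add_eq_dist(1)[of p w q] unfolding gprod_def by (simp add: dist_commute)
  then have "gprod p z w \<ge> gprod p w q - \<delta>"
    using gromov_hyperbolicD[OF hyp, of p z q w] by (simp add: gprod_commute)
  then show ?thesis
    using dpz gprod_add_eq_dist(2)[of w p q] unfolding gprod_def z_def
    by (simp add: dist_commute) argo
qed

lemma gprod_centered_segment_left:
  fixes w p q :: "'a::metric_space"
  assumes geod: "geodesic_space TYPE('a)" and t: "t \<in> {- gprod p w q..0}"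
  shows "- t - dist w (centered_segment w p q 0) / 2 \<le> gprod w p (centered_segment w p q t)"
proof -
  let ?\<sigma> = "centered_segment w p q"
  have range: "u \<in> {- gprod p w q..gprod q w p}" if "u \<in> {- gprod p w q..0}" for u
    using that gprod_nonneg[of q w p] by simp
  have "dist p (?\<sigma> t) = gprod p w q + t"
    using centered_segment_isometric[OF geod range range, of "- gprod p w q" t] t
      centered_segment_ends(1)[OF geod] by simp
  moreover have "dist (?\<sigma> 0) (?\<sigma> t) = - t"
    using centered_segment_isometric[OF geod range range, of 0 t] t by simp
  moreover have "dist (?\<sigma> 0) (?\<sigma> t) \<le> dist w (?\<sigma> 0) + dist w (?\<sigma> t)"
    by (metis dist_commute dist_triangle)
  ultimately show ?thesis
    using gprod_add_eq_dist(2)[of w p q] gprod_nonneg[of w p q]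
    unfolding gprod_def by (simp add: dist_commute) argo
qed

lemma gprod_centered_segment_right:
  fixes w p q :: "'a::metric_space"
  assumes geod: "geodesic_space TYPE('a)" and t: "t \<in> {0..gprod q w p}"
  shows "t - dist w (centered_segment w p q 0) / 2 \<le> gprod w (centered_segment w p q t) q"
proof -
  let ?\<sigma> = "centered_segment w p q"
  have range: "u \<in> {- gprod p w q..gprod q w p}" if "u \<in> {0..gprod q w p}" for u
    using that gprod_nonneg[of p w q] by simp
  have "dist (?\<sigma> t) q = gprod q w p - t"
    using centered_segment_isometric[OF geod range range, of t "gprod q w p"] t
      centered_segment_ends(2)[OF geod] by simp
  moreover have "dist (?\<sigma> 0) (?\<sigma> t) = t"
    using centered_segment_isometric[OF geod range range, of 0 t] t by simp
  moreover have "dist (?\<sigma> 0) (?\<sigma> t) \<le> dist w (?\<sigma> 0) + dist w (?\<sigma> t)"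
    by (metis dist_commute dist_triangle)
  ultimately show ?thesis
    using gprod_add_eq_dist(2)[of w q p] gprod_nonneg[of w p q]
    unfolding gprod_def by (simp add: dist_commute) argo
qed

section \<open>Geodesic lines as limits of segments\<close>

lemma proper_diagonal_convergent:
  fixes \<sigma> :: "nat \<Rightarrow> int \<Rightarrow> 'a::metric_space"
  assumes proper: "proper_space TYPE('a)" and bdd: "\<And>n k. dist w (\<sigma> n k) \<le> B k"
  obtains r where "strict_mono r" and "\<And>k. convergent (\<lambda>i. \<sigma> (r i) k)"
proof -
  define P where "P j r \<longleftrightarrow> convergent (\<lambda>i. \<sigma> (r i) (int_decode j))" for j r
  interpret subseqs P
  proof
    fix j and sq :: "nat \<Rightarrow> nat"
    have "compact (cball w (B (int_decode j)))" using proper unfolding proper_space_def by blast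
    moreover have "\<forall>i. \<sigma> (sq i) (int_decode j) \<in> cball w (B (int_decode j))" using bdd by simp
    ultimately obtain l r where "strict_mono r" "((\<lambda>i. \<sigma> (sq i) (int_decode j)) \<circ> r) \<longlonglongrightarrow> l"
      unfolding compact_eq_seq_compact_metric seq_compact_def by meson
    then show "\<exists>r'. strict_mono r' \<and> P j (sq \<circ> r')"
      unfolding P_def by (auto simp: convergent_def o_def)
  qed
  have "convergent (\<lambda>i. \<sigma> (diagseq i) k)" for k
  proof -
    have "P (int_encode k) (diagseq \<circ> (+) (Suc (int_encode k)))"
      by (rule diagseq_holds) (auto simp: P_def o_def intro: convergent_subseq_convergent[unfolded o_def])
    then have "convergent (\<lambda>i. \<sigma> (diagseq (i + Suc (int_encode k))) k)"
      unfolding P_def by (simp add: o_def add.commute)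
    then show ?thesis
      using convergent_ignore_initial_segment[of "\<lambda>i. \<sigma> (diagseq i) k" "Suc (int_encode k)"] by simp
  qed
  then show ?thesis using that subseq_diagseq by blast
qed

lemma geodesic_line_concat_unit_segments:
  fixes f :: "int \<Rightarrow> 'a::metric_space" and g :: "int \<Rightarrow> real \<Rightarrow> 'a"
  assumes f: "\<And>j k. dist (f j) (f k) = \<bar>real_of_int j - real_of_int k\<bar>"
    and g0: "\<And>k. g k 0 = f k" and g1: "\<And>k. g k 1 = f (k + 1)"
    and g: "\<And>k s t. s \<in> {0..1} \<Longrightarrow> t \<in> {0..1} \<Longrightarrow> dist (g k s) (g k t) = \<bar>s - t\<bar>"
  shows "geodesic_line (\<lambda>t. g \<lfloor>t\<rfloor> (t - of_int \<lfloor>t\<rfloor>))"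
proof -
  define F where "F t = g \<lfloor>t\<rfloor> (t - of_int \<lfloor>t\<rfloor>)" for t
  have "dist (F s) (F t) = t - s" if "s \<le> t" for s t
  proof -
    define j k where "j = \<lfloor>s\<rfloor>" and "k = \<lfloor>t\<rfloor>"
    define a b where "a = s - of_int j" and "b = t - of_int k"
    have a: "a \<in> {0..1}" and b: "b \<in> {0..1}"
      unfolding a_def b_def j_def k_def by (auto, linarith+)
    have jk: "j \<le> k" unfolding j_def k_def using that by (simp add: floor_mono)
    have F: "F s = g j a" "F t = g k b" unfolding F_def j_def a_def k_def b_def by simp_all
    show ?thesis
    proof (cases "j = k")
      case True
      then show ?thesis using g[OF a b, of k] F a_def b_def that by simp
    next
      case False
      then have jk': "j + 1 \<le> k" using jk by simp
      have "dist (F s) (F t) \<le> dist (g j a) (f (j + 1)) + dist (f (j + 1)) (f k) + dist (f k) (g k b)"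
        using F dist_triangle[of "g j a" "g k b" "f k"] dist_triangle[of "g j a" "f k" "f (j + 1)"] by simp
      also have "\<dots> = t - s"
        using g[OF a, of 1 j] g[of 0 b k] g0 g1 f[of "j + 1" k] jk' a b a_def b_def by simp
      finally have "dist (F s) (F t) \<le> t - s" .
      moreover have "dist (f j) (f (k + 1)) \<le> dist (f j) (g j a) + dist (g j a) (g k b) + dist (g k b) (f (k + 1))"
        using dist_triangle[of "f j" "f (k + 1)" "g k b"] dist_triangle[of "f j" "g k b" "g j a"] by simp
      then have "dist (F s) (F t) \<ge> t - s"
        using g[of 0 a j] g[OF b, of 1 k] g0 g1 f[of j "k + 1"] jk a b F a_def b_def by simp
      ultimately show ?thesis by simp
    qed
  qed
  then have "dist (F s) (F t) = \<bar>s - t\<bar>" for s t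
    by (cases "s \<le> t") (simp, metis abs_minus_commute abs_of_nonneg diff_ge_0_iff_ge dist_commute nle_le)
  then show ?thesis unfolding geodesic_line_def F_def by blast
qed

lemma geodesic_line_through_integer_points:
  fixes f :: "int \<Rightarrow> 'a::metric_space"
  assumes geod: "geodesic_space TYPE('a)"
    and f: "\<And>j k. dist (f j) (f k) = \<bar>real_of_int j - real_of_int k\<bar>"
  obtains F where "geodesic_line F" and "\<And>k. F (of_int k) = f k"
proof -
  let ?g = "\<lambda>k. geodesic_segment (f k) (f (k + 1))"
  have unit: "dist (f k) (f (k + 1)) = 1" for k using f[of k "k + 1"] by simp
  have "geodesic_line (\<lambda>t. ?g \<lfloor>t\<rfloor> (t - of_int \<lfloor>t\<rfloor>))"
  proof (rule geodesic_line_concat_unit_segments[OF f])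
    show "?g k 0 = f k" for k using geodesic_segment(1)[OF geod] .
    show "?g k 1 = f (k + 1)" for k using geodesic_segment(2)[OF geod, of "f k" "f (k + 1)"] unit by simp
    show "dist (?g k s) (?g k t) = \<bar>s - t\<bar>" if "s \<in> {0..1}" "t \<in> {0..1}" for k s t
      using geodesic_segment(3)[OF geod] that unit by simp
  qed
  moreover have "?g \<lfloor>of_int k\<rfloor> (of_int k - of_int \<lfloor>of_int k :: real\<rfloor>) = f k" for k
    using geodesic_segment(1)[OF geod] by simp
  ultimately show ?thesis using that by blast
qed

text \<open>Arzela-Ascoli at integer times: a diagonal subsequence converges at every integer time, and
  the limit points are spaced like the integers, so they lie on a geodesic line.\<close>
lemma geodesic_line_limit:
  fixes \<sigma> :: "nat \<Rightarrow> real \<Rightarrow> 'a::metric_space"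
  assumes proper: "proper_space TYPE('a)" and geod: "geodesic_space TYPE('a)"
    and bdd: "\<And>n t. dist w (\<sigma> n t) \<le> C + \<bar>t\<bar>"
    and iso: "\<And>t t'. \<forall>\<^sub>F n in sequentially. dist (\<sigma> n t) (\<sigma> n t') = \<bar>t - t'\<bar>"
  obtains F where "geodesic_line F"
    and "\<And>k e N. e > 0 \<Longrightarrow> \<exists>n\<ge>N. dist (\<sigma> n (of_int k)) (F (of_int k)) < e"
proof -
  obtain r where r: "strict_mono r" and conv: "\<And>k. convergent (\<lambda>i. \<sigma> (r i) (of_int k))"
    using proper_diagonal_convergent[OF proper, of w "\<lambda>n k. \<sigma> n (of_int k)" "\<lambda>k. C + \<bar>of_int k\<bar>"]
      bdd by blast
  define f where "f k = lim (\<lambda>i. \<sigma> (r i) (of_int k))" for k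
  have lim: "(\<lambda>i. \<sigma> (r i) (of_int k)) \<longlonglongrightarrow> f k" for k
    using conv[of k] unfolding f_def by (simp add: convergent_LIMSEQ_iff)
  have "dist (f j) (f k) = \<bar>real_of_int j - real_of_int k\<bar>" for j k
  proof -
    have "\<forall>\<^sub>F i in sequentially.
        dist (\<sigma> (r i) (of_int j)) (\<sigma> (r i) (of_int k)) = \<bar>real_of_int j - real_of_int k\<bar>"
      using eventually_compose_filterlim[OF iso filterlim_subseq[OF r]] .
    then have "(\<lambda>i. \<bar>real_of_int j - real_of_int k\<bar>) \<longlonglongrightarrow> dist (f j) (f k)"
      using tendsto_dist[OF lim lim] by (rule Lim_transform_eventually[rotated])
    then show ?thesis using LIMSEQ_unique[OF _ tendsto_const] by metis
  qed
  then obtain F where F: "geodesic_line F" "\<And>k. F (of_int k) = f k"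
    using geodesic_line_through_integer_points[OF geod] by blast
  have "\<exists>n\<ge>N. dist (\<sigma> n (of_int k)) (F (of_int k)) < e" if "e > 0" for k e N
  proof -
    have "\<forall>\<^sub>F i in sequentially. dist (\<sigma> (r i) (of_int k)) (f k) < e"
      using lim[of k] that unfolding tendsto_iff by blast
    then have "\<forall>\<^sub>F i in sequentially. dist (\<sigma> (r i) (of_int k)) (f k) < e \<and> N \<le> i"
      by (rule eventually_conj) simp
    then obtain i where "dist (\<sigma> (r i) (of_int k)) (f k) < e" "N \<le> i"
      unfolding eventually_sequentially by blast
    then show ?thesis using seq_suble[OF r, of i] F(2) by (metis le_trans)
  qed
  then show ?thesis using that F(1) by blast
qed

section \<open>Lines joining the ends of two geodesic lines\<close>

lemma gprod_bounded_if_not_equiv: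
  assumes hyp: "gromov_hyperbolic \<delta> TYPE('a::metric_space)"
    and la: "geodesic_line (\<alpha>::real \<Rightarrow> 'a)" and lb: "geodesic_line \<beta>"
    and ne: "\<not> gromov_equiv (\<lambda>n. \<alpha> (real n)) (\<lambda>n. \<beta> (real n))"
  obtains C where "\<And>n. gprod (\<alpha> 0) (\<alpha> (real n)) (\<beta> (real n)) \<le> C"
proof -
  define w where "w = \<alpha> 0"
  define c where "c = dist w (\<beta> 0)"
  obtain w' M where wM: "\<forall>N. \<exists>n\<ge>N. \<exists>m\<ge>N. gprod w' (\<alpha> (real n)) (\<beta> (real m)) < M"
    using ne unfolding gromov_equiv_def by (meson not_le)
  have "gprod w (\<alpha> (real n)) (\<beta> (real n)) \<le> M + 2 * \<delta> + 2 * c + dist w w'" for n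
  proof -
    obtain n' m' where nm: "n' \<ge> n" "m' \<ge> n" "gprod w' (\<alpha> (real n')) (\<beta> (real m')) < M"
      using wM by blast
    have "gprod w (\<alpha> (real n)) (\<beta> (real n)) \<le> gprod w (\<alpha> (real n')) (\<beta> (real n)) + \<delta>"
      using geodesic_line_gprod_mono[OF hyp la, of "real n" "real n'"] nm unfolding w_def by simp
    also have "\<dots> \<le> gprod (\<beta> 0) (\<beta> (real n)) (\<alpha> (real n')) + c + \<delta>"
      using gprod_change_base[of w "\<alpha> (real n')" "\<beta> (real n)" "\<beta> 0"] unfolding c_def
      by (simp add: gprod_commute)
    also have "\<dots> \<le> gprod (\<beta> 0) (\<beta> (real m')) (\<alpha> (real n')) + c + 2 * \<delta>"
      using geodesic_line_gprod_mono[OF hyp lb, of "real n" "real m'" "\<alpha> (real n')"] nm by linarith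
    also have "\<dots> \<le> gprod w (\<alpha> (real n')) (\<beta> (real m')) + 2 * c + 2 * \<delta>"
      using gprod_change_base[of "\<beta> 0" "\<beta> (real m')" "\<alpha> (real n')" w] unfolding c_def
      by (simp add: gprod_commute dist_commute)
    also have "\<dots> \<le> M + 2 * \<delta> + 2 * c + dist w w'"
      using gprod_change_base[of w "\<alpha> (real n')" "\<beta> (real m')" w'] nm(3) by simp
    finally show ?thesis .
  qed
  then show ?thesis using that unfolding w_def by blast
qed

lemma gromov_equiv_geodesic_lineI:
  assumes hyp: "gromov_hyperbolic \<delta> TYPE('a::metric_space)"
    and l: "geodesic_line (\<gamma>::real \<Rightarrow> 'a)"
    and far: "\<And>b A. \<exists>K. real K \<ge> A \<and> gprod w (\<gamma> (real K)) (v b) \<ge> real b - C"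
  shows "gromov_equiv (\<lambda>n. \<gamma> (real n)) v"
proof -
  define c where "c = dist w (\<gamma> 0)"
  have "M \<le> gprod w (\<gamma> (real a)) (v b)"
    if "nat \<lceil>M + \<bar>C\<bar> + c + \<delta>\<rceil> \<le> a" "nat \<lceil>M + \<bar>C\<bar> + c + \<delta>\<rceil> \<le> b" for M a b
  proof -
    obtain K where K: "real K \<ge> real a" "gprod w (\<gamma> (real K)) (v b) \<ge> real b - C"
      using far by blast
    have "gprod (\<gamma> 0) (\<gamma> (real a)) (\<gamma> (real K)) = real a"
      using geodesic_line_gprod[OF l, of "real a" "real K"] K(1) by simp
    then have "gprod w (\<gamma> (real a)) (\<gamma> (real K)) \<ge> real a - c"
      using gprod_change_base[of "\<gamma> 0" "\<gamma> (real a)" "\<gamma> (real K)" w] unfolding c_def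
      by (simp add: dist_commute)
    then show ?thesis
      using gromov_hyperbolicD[OF hyp, of w "\<gamma> (real a)" "\<gamma> (real K)" "v b"] K(2) that
        zero_le_dist[of w "\<gamma> 0"] unfolding c_def by linarith
  qed
  then have "gromov_equiv_at w (\<lambda>n. \<gamma> (real n)) v" unfolding gromov_equiv_at_def by blast
  then show ?thesis by (rule gromov_equiv_if_equiv_at)
qed

lemma centered_segments_between_lines:
  assumes hyp: "gromov_hyperbolic \<delta> TYPE('a::metric_space)" and geod: "geodesic_space TYPE('a)"
    and la: "geodesic_line (\<alpha>::real \<Rightarrow> 'a)" and lb: "geodesic_line \<beta>"
    and ne: "\<not> gromov_equiv (\<lambda>n. \<alpha> (real n)) (\<lambda>n. \<beta> (real n))"
  obtains C R where "\<And>n. dist (\<alpha> 0) (centered_segment (\<alpha> 0) (\<alpha> (real n)) (\<beta> (real n)) 0) \<le> C"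
    and "\<And>n t. real n \<ge> \<bar>t\<bar> + R \<Longrightarrow>
           t \<in> {- gprod (\<alpha> (real n)) (\<alpha> 0) (\<beta> (real n))..gprod (\<beta> (real n)) (\<alpha> 0) (\<alpha> (real n))}"
proof -
  define w where "w = \<alpha> 0"
  define c where "c = dist w (\<beta> 0)"
  obtain C1 where C1: "\<And>n. gprod w (\<alpha> (real n)) (\<beta> (real n)) \<le> C1"
    using gprod_bounded_if_not_equiv[OF hyp la lb ne] unfolding w_def by blast
  have "dist w (centered_segment w (\<alpha> (real n)) (\<beta> (real n)) 0) \<le> C1 + 2 * \<delta>" for n
    using dist_centered_segment_0[OF hyp geod, of w "\<alpha> (real n)" "\<beta> (real n)"] C1[of n] by linarith
  moreover have "t \<in> {- gprod (\<alpha> (real n)) w (\<beta> (real n))..gprod (\<beta> (real n)) w (\<alpha> (real n))}"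
    if "real n \<ge> \<bar>t\<bar> + (C1 + c)" for n t
  proof -
    have "dist w (\<alpha> (real n)) = real n" "dist w (\<beta> (real n)) \<ge> real n - c"
      using la lb dist_triangle[of "\<beta> 0" "\<beta> (real n)" w]
      unfolding w_def c_def geodesic_line_def by (simp_all add: dist_commute)
    then have "gprod (\<alpha> (real n)) w (\<beta> (real n)) \<ge> real n - C1"
      and "gprod (\<beta> (real n)) w (\<alpha> (real n)) \<ge> real n - c - C1"
      using C1[of n] gprod_add_eq_dist(2)[of w "\<alpha> (real n)" "\<beta> (real n)"]
        gprod_add_eq_dist(2)[of w "\<beta> (real n)" "\<alpha> (real n)"]
        gprod_commute[of w "\<alpha> (real n)" "\<beta> (real n)"] by (simp_all add: dist_commute)
    then show ?thesis
      using that zero_le_dist[of w "\<beta> 0"] unfolding c_def atLeastAtMost_iff by (intro conjI) linarith+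
  qed
  ultimately show ?thesis using that unfolding w_def by blast
qed

text \<open>The segments from \<open>\<alpha>(n)\<close> to \<open>\<beta>(n)\<close> pass within a bounded distance of \<open>\<alpha>(0)\<close>, so,
  centred there, they subconverge to a line from the endpoint of \<open>\<alpha>\<close> to that of \<open>\<beta>\<close>.\<close>
lemma geodesic_line_between_nonasymptotic_lines:
  assumes hyp: "gromov_hyperbolic \<delta> TYPE('a::metric_space)"
    and proper: "proper_space TYPE('a)" and geod: "geodesic_space TYPE('a)"
    and la: "geodesic_line (\<alpha>::real \<Rightarrow> 'a)" and lb: "geodesic_line \<beta>"
    and ne: "\<not> gromov_equiv (\<lambda>n. \<alpha> (real n)) (\<lambda>n. \<beta> (real n))"
  obtains F where "geodesic_line F" and "gromov_equiv (\<lambda>n. \<alpha> (real n)) (\<lambda>n. F (- real n))"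
    and "gromov_equiv (\<lambda>n. F (real n)) (\<lambda>n. \<beta> (real n))"
proof -
  define w where "w = \<alpha> 0"
  define \<sigma> where "\<sigma> n = centered_segment w (\<alpha> (real n)) (\<beta> (real n))" for n
  obtain C R where C0: "\<And>n. dist w (\<sigma> n 0) \<le> C"
    and range: "\<And>n t. real n \<ge> \<bar>t\<bar> + R \<Longrightarrow>
           t \<in> {- gprod (\<alpha> (real n)) w (\<beta> (real n))..gprod (\<beta> (real n)) w (\<alpha> (real n))}"
    using centered_segments_between_lines[OF hyp geod la lb ne] unfolding \<sigma>_def w_def by blast
  have "dist w (\<sigma> n t) \<le> C + \<bar>t\<bar>" for n t
    using C0[of n] centered_segment_lipschitz[OF geod, of w "\<alpha> (real n)" "\<beta> (real n)" 0 t]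
      dist_triangle[of w "\<sigma> n t" "\<sigma> n 0"]
    unfolding \<sigma>_def by (simp add: dist_commute)
  moreover have "\<forall>\<^sub>F n in sequentially. dist (\<sigma> n t) (\<sigma> n t') = \<bar>t - t'\<bar>" for t t'
  proof (rule eventually_sequentiallyI)
    fix n assume "nat \<lceil>\<bar>t\<bar> + \<bar>t'\<bar> + R\<rceil> \<le> n"
    then have "real n \<ge> \<bar>t\<bar> + R" "real n \<ge> \<bar>t'\<bar> + R" by linarith+
    then show "dist (\<sigma> n t) (\<sigma> n t') = \<bar>t - t'\<bar>"
      using centered_segment_isometric[OF geod range range] unfolding \<sigma>_def by blast
  qed
  ultimately obtain F where F: "geodesic_line F"
    and approx: "\<And>k e N. e > 0 \<Longrightarrow> \<exists>n\<ge>N. dist (\<sigma> n (of_int k)) (F (of_int k)) < e"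
    using geodesic_line_limit[OF proper geod] by blast
  have near: "\<exists>K. real K \<ge> A \<and> real K \<ge> \<bar>of_int k\<bar> + R \<and> dist (\<sigma> K (of_int k)) (F (of_int k)) < 1"
    for k :: int and A
  proof -
    obtain K where "K \<ge> nat \<lceil>max A (\<bar>of_int k\<bar> + R)\<rceil>" "dist (\<sigma> K (of_int k)) (F (of_int k)) < 1"
      using approx[where k = k and e = 1 and N = "nat \<lceil>max A (\<bar>of_int k\<bar> + R)\<rceil>"] by auto
    then show ?thesis by (intro exI[of _ K]) linarith
  qed
  have "gromov_equiv (\<lambda>n. \<alpha> (real n)) (\<lambda>b. F (- real b))"
  proof (rule gromov_equiv_geodesic_lineI[OF hyp la])
    fix b :: nat and A
    obtain K where K: "real K \<ge> A" "real K \<ge> real b + R" "dist (\<sigma> K (- real b)) (F (- real b)) < 1"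
      using near[where k = "- int b" and A = A] by auto
    have "- real b \<in> {- gprod (\<alpha> (real K)) w (\<beta> (real K))..0}"
      using range[where n = K and t = "- real b"] K(2) by simp
    from gprod_centered_segment_left[OF geod this]
    have "real b - C / 2 \<le> gprod w (\<alpha> (real K)) (\<sigma> K (- real b))"
      using C0[of K] unfolding \<sigma>_def by simp
    then show "\<exists>K. real K \<ge> A \<and> gprod w (\<alpha> (real K)) (F (- real b)) \<ge> real b - (C / 2 + 1)"
      using K gprod_lipschitz[of w "\<sigma> K (- real b)" "\<alpha> (real K)" "F (- real b)"]
      by (intro exI[of _ K]) (simp add: gprod_commute dist_commute)
  qed
  moreover have "gromov_equiv (\<lambda>n. \<beta> (real n)) (\<lambda>b. F (real b))"
  proof (rule gromov_equiv_geodesic_lineI[OF hyp lb])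
    fix b :: nat and A
    obtain K where K: "real K \<ge> A" "real K \<ge> real b + R" "dist (\<sigma> K (real b)) (F (real b)) < 1"
      using near[where k = "int b" and A = A] by auto
    have "real b \<in> {0..gprod (\<beta> (real K)) w (\<alpha> (real K))}"
      using range[where n = K and t = "real b"] K(2) by simp
    from gprod_centered_segment_right[OF geod this]
    have "real b - C / 2 \<le> gprod w (\<sigma> K (real b)) (\<beta> (real K))"
      using C0[of K] unfolding \<sigma>_def by simp
    then show "\<exists>K. real K \<ge> A \<and> gprod w (\<beta> (real K)) (F (real b)) \<ge> real b - (C / 2 + 1)"
      using K gprod_lipschitz[of w "\<sigma> K (real b)" "\<beta> (real K)" "F (real b)"]
      by (intro exI[of _ K]) (simp add: gprod_commute dist_commute)
  qed
  ultimately show ?thesis using that F gromov_equiv_sym by blast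
qed

section \<open>Generated subgroups and discreteness\<close>

lemma generated_by_subset:
  assumes "isom_subgroup \<Gamma>" and "S \<subseteq> \<Gamma>"
  shows "generated_by S \<subseteq> \<Gamma>"
proof
  fix g assume "g \<in> generated_by S"
  then show "g \<in> \<Gamma>" by induction (insert assms, unfold isom_subgroup_def, blast+)
qed

lemma generated_by_comp:
  "g \<in> generated_by S \<Longrightarrow> h \<in> generated_by S \<Longrightarrow> g \<circ> h \<in> generated_by S"
proof (induction g rule: generated_by.induct)
  case gen_id then show ?case by simp
next
  case (gen_left s g) then show ?case using generated_by.gen_left[of s S "g \<circ> h"] by (metis comp_assoc)
next
  case (gen_inv s g) then show ?case using generated_by.gen_inv[of s S "g \<circ> h"] by (metis comp_assoc)
qed

lemma generated_by_base: "s \<in> S \<Longrightarrow> s \<in> generated_by S"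
  using generated_by.gen_left[OF _ generated_by.gen_id] by fastforce

lemma isometry_inv_apply: "isometry h \<Longrightarrow> h (inv h y) = y"
  unfolding isometry_def by (simp add: bij_is_surj surj_f_inv_f)

lemma dist_inv_comp_isometry:
  assumes "isometry h"
  shows "dist x ((inv h \<circ> g) x) = dist (h x) (g x)"
  using assms isometry_inv_apply[OF assms] unfolding isometry_def by (metis comp_apply)

text \<open>By discreteness no displacement of \<open>x\<close> lies in \<open>(R, R + \<epsilon>]\<close>; apply this to \<open>h\<^sup>-\<^sup>1 g\<close>.\<close>
lemma generated_by_displacement_ball_absorbs:
  fixes \<Gamma> :: "('a::metric_space \<Rightarrow> 'a) set" and x :: 'a and R :: real
  assumes G: "isom_subgroup \<Gamma>" and disc: "discrete_action \<Gamma>"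
  defines "S \<equiv> {g\<in>\<Gamma>. dist x (g x) \<le> R}"
  obtains \<epsilon> where "\<epsilon> > 0"
    and "\<And>h g. h \<in> generated_by S \<Longrightarrow> g \<in> \<Gamma> \<Longrightarrow> dist (h x) (g x) \<le> R + \<epsilon> \<Longrightarrow> g \<in> generated_by S"
proof -
  define A where "A = (\<lambda>g. dist x (g x) - R) ` {g\<in>\<Gamma>. R < dist x (g x) \<and> dist x (g x) \<le> R + 1}"
  have "finite {g\<in>\<Gamma>. dist x (g x) \<le> R + 1}" using disc unfolding discrete_action_def by blast
  then have "finite {g\<in>\<Gamma>. R < dist x (g x) \<and> dist x (g x) \<le> R + 1}"
    by (rule finite_subset[rotated]) auto
  then have "finite A" unfolding A_def by (rule finite_imageI)
  define \<epsilon> where "\<epsilon> = Min (insert 1 A) / 2"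
  have Min_pos: "Min (insert 1 A) > 0" using \<open>finite A\<close> unfolding A_def by (subst Min_gr_iff) auto
  have gap: "g \<in> S" if g: "g \<in> \<Gamma>" and d: "dist x (g x) \<le> R + \<epsilon>" for g
  proof (rule ccontr)
    assume "g \<notin> S"
    then have "R < dist x (g x)" using g unfolding S_def by auto
    moreover have "\<epsilon> \<le> 1 / 2" using \<open>finite A\<close> unfolding \<epsilon>_def by simp
    ultimately have "dist x (g x) - R \<in> A" using g d unfolding A_def by auto
    then have "Min (insert 1 A) \<le> dist x (g x) - R" using \<open>finite A\<close> by simp
    then show False using d Min_pos unfolding \<epsilon>_def by simp
  qed
  have "g \<in> generated_by S"
    if h: "h \<in> generated_by S" and g: "g \<in> \<Gamma>" and d: "dist (h x) (g x) \<le> R + \<epsilon>" for h g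
  proof -
    have "S \<subseteq> \<Gamma>" unfolding S_def by blast
    then have hG: "h \<in> \<Gamma>" using generated_by_subset[OF G] h by blast
    have iso: "isometry h" using G hG unfolding isom_subgroup_def by blast
    have hg: "inv h \<circ> g \<in> \<Gamma>" using G hG g unfolding isom_subgroup_def by blast
    have "dist x ((inv h \<circ> g) x) \<le> R + \<epsilon>" using d dist_inv_comp_isometry[OF iso, of x g] by linarith
    then have "inv h \<circ> g \<in> S" by (rule gap[OF hg])
    then have "h \<circ> (inv h \<circ> g) \<in> generated_by S" by (rule generated_by_comp[OF h generated_by_base])
    moreover have "h \<circ> (inv h \<circ> g) = g" using isometry_inv_apply[OF iso] by (simp add: fun_eq_iff)
    ultimately show ?thesis by simp
  qed
  moreover have "\<epsilon> > 0" unfolding \<epsilon>_def using Min_pos by simp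
  ultimately show ?thesis using that by blast
qed

section \<open>Lines of the quasiconvex hull\<close>

lemma gromov_equiv_isometry:
  assumes g: "isometry g" and e: "gromov_equiv u v"
  shows "gromov_equiv (\<lambda>n. g (u n)) (\<lambda>n. g (v n))"
  unfolding gromov_equiv_def
proof (intro allI)
  fix w M
  obtain N where "\<forall>n\<ge>N. \<forall>m\<ge>N. gprod (inv g w) (u n) (v m) \<ge> M"
    using e unfolding gromov_equiv_def by blast
  moreover have "gprod w (g a) (g b) = gprod (inv g w) a b" for a b
    using g isometry_inv_apply[OF g, of w] unfolding isometry_def gprod_def by metis
  ultimately show "\<exists>N. \<forall>n\<ge>N. \<forall>m\<ge>N. M \<le> gprod w (g (u n)) (g (v m))" by metis
qed

lemma gromov_seq_isometry: "isometry g \<Longrightarrow> gromov_seq u \<Longrightarrow> gromov_seq (\<lambda>n. g (u n))"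
  using gromov_equiv_isometry[of g u u] unfolding gromov_seq_def gromov_equiv_def by blast

lemma limit_set_isometry:
  assumes G: "isom_subgroup \<Gamma>" and g: "g \<in> \<Gamma>" and u: "gromov_seq u"
    and l: "gromov_class u \<in> limit_set \<Gamma> x"
  shows "gromov_class (\<lambda>n. g (u n)) \<in> limit_set \<Gamma> x"
proof -
  have gi: "isometry g" using G g unfolding isom_subgroup_def by blast
  obtain v where orbit: "\<forall>n. v n \<in> (\<lambda>h. h x) ` \<Gamma>" and v: "v \<in> gromov_class u"
    using l unfolding limit_set_def by blast
  have "(\<lambda>n. g (v n)) \<in> gromov_class (\<lambda>n. g (u n))"
    using v gromov_seq_isometry[OF gi] gromov_equiv_isometry[OF gi] unfolding gromov_class_def by simp
  moreover have "g (v n) \<in> (\<lambda>h. h x) ` \<Gamma>" for n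
  proof -
    obtain h where "h \<in> \<Gamma>" "v n = h x" using orbit by blast
    then show ?thesis using G g unfolding isom_subgroup_def by (auto intro!: image_eqI[of _ _ "g \<circ> h"])
  qed
  moreover have "gromov_class (\<lambda>n. g (u n)) \<in> gromov_boundary"
    using gromov_seq_isometry[OF gi u] unfolding gromov_boundary_def by blast
  ultimately show ?thesis unfolding limit_set_def
    by (intro CollectI conjI exI[where x = "\<lambda>n. g (v n)"]) auto
qed

definition hull_line :: "(nat \<Rightarrow> 'a::metric_space) set set \<Rightarrow> (real \<Rightarrow> 'a) \<Rightarrow> bool" where
  "hull_line C \<gamma> \<longleftrightarrow> geodesic_line \<gamma> \<and>
     gromov_class (\<lambda>n. \<gamma> (real n)) \<in> C \<and> gromov_class (\<lambda>n. \<gamma> (- real n)) \<in> C"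

lemma QC_Hull_iff: "y \<in> QC_Hull C \<longleftrightarrow> (\<exists>\<gamma>. hull_line C \<gamma> \<and> y \<in> range \<gamma>)"
  unfolding QC_Hull_def hull_line_def by blast

lemma hull_line_reflect: "hull_line C \<gamma> \<Longrightarrow> hull_line C (\<lambda>t. \<gamma> (- t))"
  unfolding hull_line_def using geodesic_line_reflect by force

lemma hull_line_isometry:
  assumes G: "isom_subgroup \<Gamma>" and g: "g \<in> \<Gamma>" and h: "hull_line (limit_set \<Gamma> x) \<gamma>"
  shows "hull_line (limit_set \<Gamma> x) (g \<circ> \<gamma>)"
proof -
  have gi: "isometry g" using G g unfolding isom_subgroup_def by blast
  have l: "geodesic_line \<gamma>" using h unfolding hull_line_def by blast
  have "geodesic_line (g \<circ> \<gamma>)" using l gi unfolding geodesic_line_def isometry_def by simp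
  moreover have "gromov_class (\<lambda>n. g (\<gamma> (real n))) \<in> limit_set \<Gamma> x"
    using limit_set_isometry[OF G g gromov_seq_geodesic_line[OF l]] h unfolding hull_line_def by blast
  moreover have "gromov_class (\<lambda>n. g (\<gamma> (- real n))) \<in> limit_set \<Gamma> x"
    using limit_set_isometry[OF G g gromov_seq_geodesic_line[OF geodesic_line_reflect[OF l]]] h
    unfolding hull_line_def by blast
  ultimately show ?thesis unfolding hull_line_def by (simp add: o_def)
qed

lemma real_step_induct:
  fixes Q :: "real \<Rightarrow> bool"
  assumes "r > 0" and "Q t0" and step: "\<And>s t. Q s \<Longrightarrow> \<bar>s - t\<bar> \<le> r \<Longrightarrow> Q t"
  shows "Q t"
proof -
  have "\<forall>t. \<bar>t - t0\<bar> \<le> real (Suc n) * r \<longrightarrow> Q t" for n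
  proof (induction n)
    case 0
    then show ?case using step[OF \<open>Q t0\<close>] by (simp add: abs_minus_commute)
  next
    case (Suc n)
    show ?case
    proof (intro allI impI)
      fix t assume t: "\<bar>t - t0\<bar> \<le> real (Suc (Suc n)) * r"
      define s where "s = (if t0 \<le> t then max t0 (t - r) else min t0 (t + r))"
      have "\<bar>s - t0\<bar> \<le> real (Suc n) * r \<and> \<bar>s - t\<bar> \<le> r"
      proof (cases "t0 \<le> t")
        case True
        then show ?thesis using t \<open>r > 0\<close> unfolding s_def by (simp add: ring_distribs abs_if max_def)
      next
        case False
        then show ?thesis using t \<open>r > 0\<close> unfolding s_def by (simp add: ring_distribs abs_if min_def)
      qed
      then show "Q t" using Suc.IH step by blast
    qed
  qed
  moreover obtain k where "\<bar>t - t0\<bar> \<le> real (Suc k) * r"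
  proof -
    have "\<bar>t - t0\<bar> / r \<le> real (nat \<lceil>\<bar>t - t0\<bar> / r\<rceil>)" by (rule real_nat_ceiling_ge)
    then have "\<bar>t - t0\<bar> \<le> real (nat \<lceil>\<bar>t - t0\<bar> / r\<rceil>) * r" using \<open>r > 0\<close> by (simp only: pos_divide_le_eq)
    then show ?thesis using that[of "nat \<lceil>\<bar>t - t0\<bar> / r\<rceil>"] \<open>r > 0\<close> by (simp add: algebra_simps)
  qed
  ultimately show ?thesis by blast
qed

context
  fixes \<delta> \<epsilon> :: real and C :: "(nat \<Rightarrow> 'a::metric_space) set set" and P :: "'a \<Rightarrow> bool"
  assumes hyp: "gromov_hyperbolic \<delta> TYPE('a)" and "\<delta> \<ge> 0" and "\<epsilon> > 0"
    and step: "\<And>y y'. P y \<Longrightarrow> y' \<in> QC_Hull C \<Longrightarrow> dist y y' \<le> 4 * \<delta> + \<epsilon> \<Longrightarrow> P y'"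
begin

lemma hull_line_propagate_along:
  assumes "hull_line C \<gamma>" and "P (\<gamma> s)"
  shows "P (\<gamma> t)"
proof (rule real_step_induct[where Q = "\<lambda>t. P (\<gamma> t)" and r = "4 * \<delta> + \<epsilon>"])
  show "4 * \<delta> + \<epsilon> > 0" using \<open>\<delta> \<ge> 0\<close> \<open>\<epsilon> > 0\<close> by simp
  show "P (\<gamma> t')" if "P (\<gamma> s')" "\<bar>s' - t'\<bar> \<le> 4 * \<delta> + \<epsilon>" for s' t'
  proof (rule step[OF that(1)])
    show "\<gamma> t' \<in> QC_Hull C" using assms(1) unfolding QC_Hull_iff by blast
    show "dist (\<gamma> s') (\<gamma> t') \<le> 4 * \<delta> + \<epsilon>"
      using assms(1) that(2) unfolding hull_line_def geodesic_line_def by simp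
  qed
qed (fact assms(2))

lemma hull_line_propagate_asymptotic:
  assumes "hull_line C \<alpha>" and "hull_line C \<beta>" and "P (\<alpha> s)"
    and "gromov_equiv (\<lambda>n. \<alpha> (real n)) (\<lambda>n. \<beta> (real n))"
  shows "P (\<beta> t)"
proof -
  obtain s' t' where "dist (\<alpha> s') (\<beta> t') \<le> 4 * \<delta> + \<epsilon>"
    using asymptotic_geodesic_lines_close[OF hyp \<open>\<delta> \<ge> 0\<close> _ _ assms(4) \<open>\<epsilon> > 0\<close>] assms(1,2)
    unfolding hull_line_def by blast
  moreover have "\<beta> t' \<in> QC_Hull C" using assms(2) unfolding QC_Hull_iff by blast
  moreover have "P (\<alpha> s')" using hull_line_propagate_along[OF assms(1,3)] .
  ultimately show ?thesis using step hull_line_propagate_along[OF assms(2)] by blast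
qed

text \<open>Two hull lines are either asymptotic or joined, end to end, by a third hull line.\<close>
lemma hull_line_propagate:
  assumes proper: "proper_space TYPE('a)" and geod: "geodesic_space TYPE('a)"
    and \<alpha>: "hull_line C \<alpha>" and \<beta>: "hull_line C \<beta>" and "P (\<alpha> s)"
  shows "P (\<beta> t)"
proof (cases "gromov_equiv (\<lambda>n. \<alpha> (real n)) (\<lambda>n. \<beta> (real n))")
  case True
  then show ?thesis using hull_line_propagate_asymptotic[OF \<alpha> \<beta> \<open>P (\<alpha> s)\<close>] by blast
next
  case False
  then obtain F where F: "geodesic_line F"
    and \<alpha>F: "gromov_equiv (\<lambda>n. \<alpha> (real n)) (\<lambda>n. F (- real n))"
    and F\<beta>: "gromov_equiv (\<lambda>n. F (real n)) (\<lambda>n. \<beta> (real n))"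
    using geodesic_line_between_nonasymptotic_lines[OF hyp proper geod] \<alpha> \<beta>
    unfolding hull_line_def by metis
  have "hull_line C F"
    using F \<alpha> \<beta> gromov_class_eq_if_equiv[OF hyp \<alpha>F] gromov_class_eq_if_equiv[OF hyp F\<beta>]
    unfolding hull_line_def by simp
  then have "P (F (- t'))" for t'
    using hull_line_propagate_asymptotic[OF \<alpha> hull_line_reflect \<open>P (\<alpha> s)\<close>] \<alpha>F by simp
  then show ?thesis
    using hull_line_propagate_asymptotic[OF \<open>hull_line C F\<close> \<beta> _ F\<beta>] by blast
qed

end

lemma isom_subgroup_subset_if_absorbing:
  fixes x :: "'a::metric_space" and H :: "('a \<Rightarrow> 'a) set"
  assumes hyp: "gromov_hyperbolic \<delta> TYPE('a)" and "\<delta> \<ge> 0"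
    and proper: "proper_space TYPE('a)" and geod: "geodesic_space TYPE('a)"
    and G: "isom_subgroup \<Gamma>" and cc: "qc_cocompact D \<Gamma> x" and x: "x \<in> QC_Hull (limit_set \<Gamma> x)"
    and "D \<ge> 0" and "\<epsilon> > 0" and "id \<in> H"
    and absorb: "\<And>h g. h \<in> H \<Longrightarrow> g \<in> \<Gamma> \<Longrightarrow> dist (h x) (g x) \<le> 2 * D + 4 * \<delta> + \<epsilon> \<Longrightarrow> g \<in> H"
  shows "\<Gamma> \<subseteq> H"
proof
  define P where "P y \<longleftrightarrow> (\<exists>h\<in>H. dist (h x) y \<le> D)" for y
  have step: "P y'" if "P y" and y': "y' \<in> QC_Hull (limit_set \<Gamma> x)" and d: "dist y y' \<le> 4 * \<delta> + \<epsilon>"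
    for y y'
  proof -
    obtain h where h: "h \<in> H" "dist (h x) y \<le> D" using \<open>P y\<close> unfolding P_def by blast
    obtain g where g: "g \<in> \<Gamma>" "dist (g x) y' \<le> D" using cc x y' unfolding qc_cocompact_def by blast
    have "dist (h x) (g x) \<le> dist (h x) y + dist y y' + dist (g x) y'"
      using dist_triangle[of "h x" "g x" y'] dist_triangle[of "h x" y' y] by (simp add: dist_commute)
    then have "g \<in> H" using h(2) g(2) d by (intro absorb[OF h(1) g(1)]) linarith
    then show "P y'" using g(2) unfolding P_def by (metis dist_commute)
  qed
  obtain \<alpha> s where \<alpha>: "hull_line (limit_set \<Gamma> x) \<alpha>" and "x = \<alpha> s" using x unfolding QC_Hull_iff by blast
  have "P (\<alpha> s)" unfolding P_def using \<open>id \<in> H\<close> \<open>D \<ge> 0\<close> \<open>x = \<alpha> s\<close> by (intro bexI[of _ id]) auto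
  fix g assume g: "g \<in> \<Gamma>"
  have "P ((g \<circ> \<alpha>) s)"
    by (rule hull_line_propagate[where P = P, OF hyp \<open>\<delta> \<ge> 0\<close> \<open>\<epsilon> > 0\<close> _ proper geod \<alpha>
          hull_line_isometry[OF G g \<alpha>] \<open>P (\<alpha> s)\<close>]) (fact step)
  then obtain h where h: "h \<in> H" "dist (h x) (g x) \<le> D"
    unfolding P_def comp_apply \<open>x = \<alpha> s\<close>[symmetric] by blast
  show "g \<in> H" using h(2) \<open>\<delta> \<ge> 0\<close> \<open>\<epsilon> > 0\<close> \<open>D \<ge> 0\<close> by (intro absorb[OF h(1) g]) linarith
qed

theorem mainTheorem11:
  fixes \<delta> D :: real and x :: "'a::metric_space" and \<Gamma> :: "('a \<Rightarrow> 'a) set"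
  assumes "\<delta> \<ge> 0" and "D \<ge> 0"
    and "class_M \<delta> D x \<Gamma>"
  shows "generated_by {g\<in>\<Gamma>. dist x (g x) \<le> 2 * D + 72 * \<delta>} = \<Gamma>"
proof -
  have proper: "proper_space TYPE('a)" and geod: "geodesic_space TYPE('a)"
    and hyp: "gromov_hyperbolic \<delta> TYPE('a)" and G: "isom_subgroup \<Gamma>"
    and disc: "discrete_action \<Gamma>" and cc: "qc_cocompact D \<Gamma> x"
    and x: "x \<in> QC_Hull (limit_set \<Gamma> x)"
    using assms(3) unfolding class_M_def by auto
  define H where "H = generated_by {g\<in>\<Gamma>. dist x (g x) \<le> 2 * D + 72 * \<delta>}"
  obtain \<epsilon> where "\<epsilon> > 0"
    and absorb: "\<And>h g. h \<in> H \<Longrightarrow> g \<in> \<Gamma> \<Longrightarrow> dist (h x) (g x) \<le> 2 * D + 72 * \<delta> + \<epsilon> \<Longrightarrow> g \<in> H"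
    using generated_by_displacement_ball_absorbs[OF G disc] unfolding H_def by blast
  have "\<Gamma> \<subseteq> H"
  proof (rule isom_subgroup_subset_if_absorbing[OF hyp \<open>\<delta> \<ge> 0\<close> proper geod G cc x \<open>D \<ge> 0\<close> \<open>\<epsilon> > 0\<close>])
    show "id \<in> H" unfolding H_def by (rule generated_by.gen_id)
    show "g \<in> H" if "h \<in> H" "g \<in> \<Gamma>" "dist (h x) (g x) \<le> 2 * D + 4 * \<delta> + \<epsilon>" for h g
      using that(3) \<open>\<delta> \<ge> 0\<close> by (intro absorb[OF that(1,2)]) linarith
  qed
  moreover have "H \<subseteq> \<Gamma>" unfolding H_def by (rule generated_by_subset[OF G]) blast
  ultimately show ?thesis unfolding H_def by blast
qed

end
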